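(* Let $m\ge 1$, $n\ge 2$, $d=(n-1)m$, let $\mathcal{H}\in\operatorname{H}^m(\mathbb{C}^n)$ with associated vector $h=(h_0,\dots,h_d)$, and regard $h$ as the symmetric binary tensor in $\operatorname{S}^d(\mathbb{C}^2)$ represented by the binary form $h(x,y)=\sum_{j=0}^d\binom{d}{j}h_jx^jy^{d-j}$. Then $\operatorname{rank}_V(\mathcal{H})=\operatorname{rank}_S(h)$ and $\underline{\operatorname{rank}}_V(\mathcal{H})=\underline{\operatorname{rank}}_S(h)$.
   Context: A tensor $\mathcal{H}\in\operatorname{T}^m(\mathbb{C}^n)$ is Hankel if there is a vector $h=(h_0,\dots,h_{(n-1)m})$ (the associated vector) with $\mathcal{H}_{i_1\dots i_m}=h_{i_1+\cdots+i_m-m}$ for all $1\le i_1,\dots,i_m\le n$; $\operatorname{H}^m(\mathbb{C}^n)$ is the space of such tensors. The binary form $h(x,y)$ is identified with the symmetric tensor $T\in\operatorname{S}^d(\mathbb{C}^2)$ whose entry $T_{i_1\dots i_d}$ ($i_k\in\{1,2\}$) equals $h_j$ where $j$ is the number of indices equal to $1$. Symmetric rank: $\operatorname{rank}_S(\mathcal{A})=\min\{r:\mathcal{A}=\sum_{i=1}^r u_i^{\otimes \mathrm{ord}}\}$; symmetric border rank $\underline{\operatorname{rank}}_S(\mathcal{A})$ is the least $r$ such that $\mathcal{A}$ is a limit of tensors of the form $\sum_{i=1}^r u_i^{\otimes \mathrm{ord}}$. Vandermonde rank $\operatorname{rank}_V(\mathcal{H})$: least $r$ with $\mathcal{H}=\sum_{i=1}^r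 (a_i^{n-1},a_i^{n-2}b_i,\dots,b_i^{n-1})^{\otimes m}$, $a_i,b_i\in\mathbb{C}$. Vandermonde border rank $\underline{\operatorname{rank}}_V(\mathcal{H})$: least $r$ such that $\mathcal{H}$ is a limit of Hankel tensors of Vandermonde rank at most $r$. *)

theory Defs
  imports Complex_Main
begin

text \<open>Tensors of order k over C^N are represented as functions on index lists;
  only lists of length k with entries in {0..<N} (0-based indices) matter.\<close>

definition tensor_idx :: "nat \<Rightarrow> nat \<Rightarrow> nat list set" where
  "tensor_idx k N = {idx. length idx = k \<and> set idx \<subseteq> {..<N}}"

definition sym_decomp :: "nat \<Rightarrow> nat \<Rightarrow> nat \<Rightarrow> (nat list \<Rightarrow> complex) \<Rightarrow> bool" where
  "sym_decomp N k r T \<longleftrightarrow> (\<exists>u :: nat \<Rightarrow> nat \<Rightarrow> complex.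
      \<forall>idx \<in> tensor_idx k N. T idx = (\<Sum>i<r. prod_list (map (u i) idx)))"

definition sym_rank :: "nat \<Rightarrow> nat \<Rightarrow> (nat list \<Rightarrow> complex) \<Rightarrow> nat" where
  "sym_rank N k T = (LEAST r. sym_decomp N k r T)"

definition sym_border_rank :: "nat \<Rightarrow> nat \<Rightarrow> (nat list \<Rightarrow> complex) \<Rightarrow> nat" where
  "sym_border_rank N k T = (LEAST r. \<exists>X :: nat \<Rightarrow> nat list \<Rightarrow> complex.
      (\<forall>j. sym_decomp N k r (X j)) \<and>
      (\<forall>idx \<in> tensor_idx k N. (\<lambda>j. X j idx) \<longlonglongrightarrow> T idx))"

text \<open>T (order m over C^n) is a sum of r Vandermonde rank-one tensors
  (a^(n-1), a^(n-2) b, ..., b^(n-1))^{\<otimes>m}; 0-based entry k is a^(n-1-k) b^k.\<close>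
definition vand_decomp :: "nat \<Rightarrow> nat \<Rightarrow> nat \<Rightarrow> (nat list \<Rightarrow> complex) \<Rightarrow> bool" where
  "vand_decomp n m r T \<longleftrightarrow> (\<exists>a b :: nat \<Rightarrow> complex.
      \<forall>idx \<in> tensor_idx m n. T idx =
        (\<Sum>i<r. prod_list (map (\<lambda>k. a i ^ (n - 1 - k) * b i ^ k) idx)))"

definition vand_rank :: "nat \<Rightarrow> nat \<Rightarrow> (nat list \<Rightarrow> complex) \<Rightarrow> nat" where
  "vand_rank n m T = (LEAST r. vand_decomp n m r T)"

text \<open>Limits of Hankel tensors of Vandermonde rank at most r (such sums are
  automatically Hankel). Convergence is entrywise, equivalent to norm convergence
  in the finite-dimensional tensor space. Rank at most r = decomposition with
  exactly r terms, since zero terms (a = b = 0) are allowed.\<close>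
definition vand_border_rank :: "nat \<Rightarrow> nat \<Rightarrow> (nat list \<Rightarrow> complex) \<Rightarrow> nat" where
  "vand_border_rank n m T = (LEAST r. \<exists>X :: nat \<Rightarrow> nat list \<Rightarrow> complex.
      (\<forall>j. vand_decomp n m r (X j)) \<and>
      (\<forall>idx \<in> tensor_idx m n. (\<lambda>j. X j idx) \<longlonglongrightarrow> T idx))"

text \<open>Hankel tensor in H^m(C^n) with associated vector h (0-based indices:
  entry at (i_1,...,i_m) is h (i_1+...+i_m)).\<close>
definition is_hankel_with :: "nat \<Rightarrow> nat \<Rightarrow> (nat list \<Rightarrow> complex) \<Rightarrow> (nat \<Rightarrow> complex) \<Rightarrow> bool" where
  "is_hankel_with n m H h \<longleftrightarrow> (\<forall>idx \<in> tensor_idx m n. H idx = h (sum_list idx))"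

text \<open>The symmetric binary tensor in S^d(C^2) of h: entry = h_j where j is the
  number of indices equal to the first coordinate (0-based index 0).\<close>
definition binary_tensor :: "(nat \<Rightarrow> complex) \<Rightarrow> nat list \<Rightarrow> complex" where
  "binary_tensor h idx = h (count_list idx 0)"

end

theory Submission
  imports Defs
begin

text \<open>Both tensors are pull-backs of the vector h along a surjection of index sets onto
  {..d}: the Hankel tensor through the index sum, the binary tensor through the number of
  indices equal to the first coordinate. Along these surjections the rank-one terms pull back
  alike: a Vandermonde term of (a,b) has entry a^(d-s) b^s at index sum s, and a symmetric
  term of u = (u_1,u_2) has entry u_1^s u_2^(d-s) where s indices are first coordinates.
  Hence for every r the two tensors admit r-term decompositions, or are limits of such,
  exactly when h is a vector of the form s \<mapsto> \<Sum>i<r. a_i^(d-s) b_i^s, or a limit of such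
  vectors, and the (border) ranks coincide.\<close>

definition power_sum_vectors :: "nat \<Rightarrow> nat \<Rightarrow> (nat \<Rightarrow> complex) set" where
  "power_sum_vectors d r = {(\<lambda>s. \<Sum>i<r. a i ^ (d - s) * b i ^ s) | a b. True}"

lemma sum_list_le_mult_length:
  "set xs \<subseteq> {..<n} \<Longrightarrow> sum_list xs \<le> (n - 1) * length xs"
  by (induction xs) force+

lemma prod_list_vandermonde_entries:
  fixes x y :: "'a :: comm_monoid_mult"
  assumes "set xs \<subseteq> {..<n}"
  shows "prod_list (map (\<lambda>k. x ^ (n - 1 - k) * y ^ k) xs)
       = x ^ ((n - 1) * length xs - sum_list xs) * y ^ sum_list xs"
  using assms
proof (induction xs)
  case (Cons k xs)
  have "k \<le> n - 1" and "sum_list xs \<le> (n - 1) * length xs"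
    using Cons.prems sum_list_le_mult_length by auto
  then have exponent: "(n - 1) * length (k # xs) - sum_list (k # xs)
           = (n - 1 - k) + ((n - 1) * length xs - sum_list xs)"
    by simp
  have "prod_list (map (\<lambda>k. x ^ (n - 1 - k) * y ^ k) (k # xs))
      = x ^ (n - 1 - k) * y ^ k * (x ^ ((n - 1) * length xs - sum_list xs) * y ^ sum_list xs)"
    using Cons by simp
  also have "\<dots> = x ^ ((n - 1 - k) + ((n - 1) * length xs - sum_list xs)) * y ^ (k + sum_list xs)"
    by (simp add: power_add mult_ac)
  finally show ?case
    by (subst exponent) simp
qed simp

lemma prod_list_binary_entries:
  fixes u :: "nat \<Rightarrow> 'a :: comm_monoid_mult"
  assumes "set xs \<subseteq> {..<2}"
  shows "prod_list (map u xs) = u 0 ^ count_list xs 0 * u 1 ^ (length xs - count_list xs 0)"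
  using assms
proof (induction xs)
  case (Cons k xs)
  have "count_list xs 0 \<le> length xs"
    by (rule count_le_length)
  moreover have "k = 0 \<or> k = 1"
    using Cons.prems by auto
  ultimately show ?case
    using Cons by (auto simp: Suc_diff_le mult_ac)
qed simp

lemma sum_list_image_tensor_idx:
  assumes "n \<ge> 1"
  shows "sum_list ` tensor_idx m n = {..(n - 1) * m}"
proof
  show "sum_list ` tensor_idx m n \<subseteq> {..(n - 1) * m}"
  proof (rule image_subsetI)
    fix xs assume "xs \<in> tensor_idx m n"
    then have "set xs \<subseteq> {..<n}" "length xs = m"
      unfolding tensor_idx_def by auto
    then show "sum_list xs \<in> {..(n - 1) * m}"
      using sum_list_le_mult_length by fastforce
  qed
  show "{..(n - 1) * m} \<subseteq> sum_list ` tensor_idx m n"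
  proof (induction m)
    case 0
    have "[] \<in> tensor_idx 0 n"
      by (simp add: tensor_idx_def)
    then have "sum_list [] \<in> sum_list ` tensor_idx 0 n"
      by (rule imageI)
    then show ?case
      by simp
  next
    case (Suc m)
    show ?case
    proof
      fix s assume s: "s \<in> {..(n - 1) * Suc m}"
      define k where "k = min s (n - 1)"
      have "s - k \<in> {..(n - 1) * m}"
        using s by (auto simp: k_def)
      then have "s - k \<in> sum_list ` tensor_idx m n"
        using Suc.IH by (rule subsetD[rotated])
      then obtain xs where xs: "xs \<in> tensor_idx m n" "sum_list xs = s - k"
        by (metis imageE)
      have "k < n" "k \<le> s"
        using assms by (auto simp: k_def)
      then have "k # xs \<in> tensor_idx (Suc m) n" "sum_list (k # xs) = s"
        using xs by (auto simp: tensor_idx_def)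
      then show "s \<in> sum_list ` tensor_idx (Suc m) n"
        by (metis image_eqI)
    qed
  qed
qed

lemma count_list_image_tensor_idx:
  "(\<lambda>xs. count_list xs 0) ` tensor_idx d 2 = {..d}"
proof
  show "(\<lambda>xs. count_list xs 0) ` tensor_idx d 2 \<subseteq> {..d}"
    using count_le_length by (auto simp: tensor_idx_def)
  have count_replicate: "count_list (replicate k x) y = (if x = y then k else 0)" for k and x y :: nat
    by (induction k) auto
  have "s = count_list (replicate s 0 @ replicate (d - s) (1 :: nat)) 0"
    and "s \<le> d \<Longrightarrow> replicate s 0 @ replicate (d - s) 1 \<in> tensor_idx d 2" for s
    by (auto simp: tensor_idx_def count_replicate)
  then show "{..d} \<subseteq> (\<lambda>xs. count_list xs 0) ` tensor_idx d 2"
    by blast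
qed

lemma vand_decomp_iff_power_sum:
  "vand_decomp n m r X \<longleftrightarrow>
     (\<exists>f \<in> power_sum_vectors ((n - 1) * m) r. \<forall>xs \<in> tensor_idx m n. X xs = f (sum_list xs))"
proof -
  have "(\<Sum>i<r. prod_list (map (\<lambda>k. a i ^ (n - 1 - k) * b i ^ k) xs))
      = (\<Sum>i<r. a i ^ ((n - 1) * m - sum_list xs) * b i ^ sum_list xs)"
    if "xs \<in> tensor_idx m n" for a b :: "nat \<Rightarrow> complex" and xs
  proof -
    have "set xs \<subseteq> {..<n}" "length xs = m"
      using that by (auto simp: tensor_idx_def)
    then show ?thesis
      using prod_list_vandermonde_entries[of xs n] by (intro sum.cong) auto
  qed
  then show ?thesis
    unfolding vand_decomp_def power_sum_vectors_def by auto
qed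

lemma sym_decomp_binary_iff_power_sum:
  "sym_decomp 2 d r X \<longleftrightarrow>
     (\<exists>f \<in> power_sum_vectors d r. \<forall>xs \<in> tensor_idx d 2. X xs = f (count_list xs 0))"
proof -
  have entry: "(\<Sum>i<r. prod_list (map (u i) xs))
      = (\<Sum>i<r. u i 1 ^ (d - count_list xs 0) * u i 0 ^ count_list xs 0)"
    if "xs \<in> tensor_idx d 2" for u :: "nat \<Rightarrow> nat \<Rightarrow> complex" and xs
    using that prod_list_binary_entries[of xs]
    by (intro sum.cong) (auto simp: tensor_idx_def mult.commute)
  show ?thesis
  proof
    assume "sym_decomp 2 d r X"
    then obtain u where "\<forall>xs \<in> tensor_idx d 2. X xs = (\<Sum>i<r. prod_list (map (u i) xs))"
      unfolding sym_decomp_def by blast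
    then show "\<exists>f \<in> power_sum_vectors d r. \<forall>xs \<in> tensor_idx d 2. X xs = f (count_list xs 0)"
      using entry unfolding power_sum_vectors_def by fastforce
  next
    assume "\<exists>f \<in> power_sum_vectors d r. \<forall>xs \<in> tensor_idx d 2. X xs = f (count_list xs 0)"
    then obtain a b where
      ab: "\<forall>xs \<in> tensor_idx d 2. X xs = (\<Sum>i<r. a i ^ (d - count_list xs 0) * b i ^ count_list xs 0)"
      unfolding power_sum_vectors_def by blast
    show "sym_decomp 2 d r X"
      unfolding sym_decomp_def
      using ab entry[where u = "\<lambda>i k. if k = 0 then b i else a i"]
      by (intro exI[of _ "\<lambda>i k. if k = 0 then b i else a i"]) simp
  qed
qed

lemma decomp_pullback_iff:
  assumes "\<sigma> ` I = S" and "\<forall>x \<in> I. T x = g (\<sigma> x)"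
  shows "(\<exists>f \<in> D. \<forall>x \<in> I. T x = f (\<sigma> x)) \<longleftrightarrow> (\<exists>f \<in> D. \<forall>s \<in> S. g s = f s)"
  using assms by auto

lemma border_decomp_pullback_iff:
  fixes T :: "'i \<Rightarrow> 'a :: topological_space"
  assumes "\<sigma> ` I = S" and "\<forall>x \<in> I. T x = g (\<sigma> x)"
  shows "(\<exists>X. (\<forall>j. \<exists>f \<in> D. \<forall>x \<in> I. X j x = f (\<sigma> x)) \<and> (\<forall>x \<in> I. (\<lambda>j. X j x) \<longlonglongrightarrow> T x))
     \<longleftrightarrow> (\<exists>F. (\<forall>j. F j \<in> D) \<and> (\<forall>s \<in> S. (\<lambda>j. F j s) \<longlonglongrightarrow> g s))"
proof
  assume "\<exists>X. (\<forall>j. \<exists>f \<in> D. \<forall>x \<in> I. X j x = f (\<sigma> x)) \<and> (\<forall>x \<in> I. (\<lambda>j. X j x) \<longlonglongrightarrow> T x)"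
  then obtain X F where F: "\<forall>j. F j \<in> D \<and> (\<forall>x \<in> I. X j x = F j (\<sigma> x))"
    and lim: "\<forall>x \<in> I. (\<lambda>j. X j x) \<longlonglongrightarrow> T x"
    by (metis choice)
  have "(\<lambda>j. F j (\<sigma> x)) \<longlonglongrightarrow> g (\<sigma> x)" if "x \<in> I" for x
    using F lim assms(2) that by simp
  then show "\<exists>F. (\<forall>j. F j \<in> D) \<and> (\<forall>s \<in> S. (\<lambda>j. F j s) \<longlonglongrightarrow> g s)"
    using F assms(1) by blast
next
  assume "\<exists>F. (\<forall>j. F j \<in> D) \<and> (\<forall>s \<in> S. (\<lambda>j. F j s) \<longlonglongrightarrow> g s)"
  then obtain F where "\<forall>j. F j \<in> D" "\<forall>s \<in> S. (\<lambda>j. F j s) \<longlonglongrightarrow> g s"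
    by blast
  then show "\<exists>X. (\<forall>j. \<exists>f \<in> D. \<forall>x \<in> I. X j x = f (\<sigma> x)) \<and> (\<forall>x \<in> I. (\<lambda>j. X j x) \<longlonglongrightarrow> T x)"
    using assms by (intro exI[of _ "\<lambda>j x. F j (\<sigma> x)"]) auto
qed

theorem lemma3p2:
  fixes m n :: nat and H :: "nat list \<Rightarrow> complex" and h :: "nat \<Rightarrow> complex"
  assumes "m \<ge> 1" and "n \<ge> 2"
    and "is_hankel_with n m H h"
  shows "vand_rank n m H = sym_rank 2 ((n - 1) * m) (binary_tensor h)
       \<and> vand_border_rank n m H = sym_border_rank 2 ((n - 1) * m) (binary_tensor h)"
proof -
  define d where "d = (n - 1) * m"
  have hankel: "sum_list ` tensor_idx m n = {..d}" "\<forall>xs \<in> tensor_idx m n. H xs = h (sum_list xs)"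
    using sum_list_image_tensor_idx assms by (auto simp: d_def is_hankel_with_def)
  have binary: "(\<lambda>xs. count_list xs 0) ` tensor_idx d 2 = {..d}"
    "\<forall>xs \<in> tensor_idx d 2. binary_tensor h xs = h (count_list xs 0)"
    by (simp_all add: count_list_image_tensor_idx binary_tensor_def)
  show ?thesis
    unfolding d_def[symmetric] vand_rank_def sym_rank_def vand_border_rank_def sym_border_rank_def
      vand_decomp_iff_power_sum sym_decomp_binary_iff_power_sum
      decomp_pullback_iff[OF hankel] decomp_pullback_iff[OF binary]
      border_decomp_pullback_iff[OF hankel] border_decomp_pullback_iff[OF binary]
    by simp
qed

end
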